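(* Let $G$ be a graph and $U \subseteq V(G)$. Suppose $G$ has a minor with countable branch sets which is a barricade with bipartition $(A,B)$ such that for every $b\in B$ the branch set of $b$ contains a vertex of $U$. Then $G$ has a $U$-rooted minor with countable branch sets that is a barricade.
   Context: A barricade is a bipartite graph with bipartition $(A,B)$ such that $|A|<|B|$ and every vertex of $B$ has infinitely many neighbours in $A$. Minors are given by disjoint connected branch sets; a minor is $U$-rooted if every branch set contains a vertex of $U$. *)

theory Defs
  imports Main "HOL-Library.Countable_Set"
begin

definition graph :: "'a set \<Rightarrow> ('a \<Rightarrow> 'a \<Rightarrow> bool) \<Rightarrow> bool" where
  "graph V E \<longleftrightarrow> (\<forall>u v. E u v \<longrightarrow> u \<in> V \<and> v \<in> V \<and> u \<noteq> v \<and> E v u)"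

definition connected_set :: "('a \<Rightarrow> 'a \<Rightarrow> bool) \<Rightarrow> 'a set \<Rightarrow> bool" where
  "connected_set E X \<longleftrightarrow> X \<noteq> {} \<and>
     (\<forall>x\<in>X. \<forall>y\<in>X. (\<lambda>u v. u \<in> X \<and> v \<in> X \<and> E u v)\<^sup>*\<^sup>* x y)"

definition minor_model ::
  "'a set \<Rightarrow> ('a \<Rightarrow> 'a \<Rightarrow> bool) \<Rightarrow> 'b set \<Rightarrow> ('b \<Rightarrow> 'b \<Rightarrow> bool) \<Rightarrow> ('b \<Rightarrow> 'a set) \<Rightarrow> bool" where
  "minor_model V E HV HE \<beta> \<longleftrightarrow> graph HV HE \<and>
     (\<forall>h\<in>HV. \<beta> h \<subseteq> V \<and> connected_set E (\<beta> h)) \<and>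
     (\<forall>h\<in>HV. \<forall>h'\<in>HV. h \<noteq> h' \<longrightarrow> \<beta> h \<inter> \<beta> h' = {}) \<and>
     (\<forall>h h'. HE h h' \<longrightarrow> (\<exists>x\<in>\<beta> h. \<exists>y\<in>\<beta> h'. E x y))"

definition barricade :: "'b set \<Rightarrow> ('b \<Rightarrow> 'b \<Rightarrow> bool) \<Rightarrow> 'b set \<Rightarrow> 'b set \<Rightarrow> bool" where
  "barricade HV HE A B \<longleftrightarrow> graph HV HE \<and>
     A \<union> B = HV \<and> A \<inter> B = {} \<and>
     (\<forall>u v. HE u v \<longrightarrow> (u \<in> A \<and> v \<in> B) \<or> (u \<in> B \<and> v \<in> A)) \<and>
     (card_of A, card_of B) \<in> ordLess \<and>
     (\<forall>b\<in>B. infinite {a\<in>A. HE b a})"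

end

theory Submission
  imports Defs
begin

(*
  Choose, by Zorn's lemma, a maximal matching M between A and B among the edges of the
  barricade H. Contract every matched edge ab into the single branch set beta a \<union> beta b,
  and keep beta b for every unmatched b \<in> B. Every new branch set contains beta b for
  some b \<in> B, so the new minor is U-rooted, and its branch sets are still countable.
  The contracted pairs number at most |M| \<le> |A|; since A is infinite and |A| < |B|,
  removing the at most |A| matched vertices from B leaves more than |A| unmatched ones.
  By maximality every A-neighbour of an unmatched b is matched, and distinct neighbours
  lie in distinct contracted pairs, so b still has infinitely many neighbours.
*)

unbundle cardinal_syntax

lemma connected_set_Un:
  assumes "connected_set E X" "connected_set E Y" "x \<in> X" "y \<in> Y" "E x y" "E y x"
  shows "connected_set E (X \<union> Y)"
proof -
  let ?R = "\<lambda>S u v. u \<in> S \<and> v \<in> S \<and> E u v"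
  have widen: "(?R (X \<union> Y))\<^sup>*\<^sup>* u v" if "(?R S)\<^sup>*\<^sup>* u v" "S \<subseteq> X \<union> Y" for S u v
    using mono_rtranclp[of "?R S" "?R (X \<union> Y)"] that by blast
  have in_X: "(?R (X \<union> Y))\<^sup>*\<^sup>* u v" if "u \<in> X" "v \<in> X" for u v
    using assms(1) that by (intro widen[of X]) (auto simp: connected_set_def)
  have in_Y: "(?R (X \<union> Y))\<^sup>*\<^sup>* u v" if "u \<in> Y" "v \<in> Y" for u v
    using assms(2) that by (intro widen[of Y]) (auto simp: connected_set_def)
  have across: "(?R (X \<union> Y))\<^sup>*\<^sup>* x y" "(?R (X \<union> Y))\<^sup>*\<^sup>* y x"
    using assms(3-6) by (simp_all add: r_into_rtranclp)
  have "(?R (X \<union> Y))\<^sup>*\<^sup>* u v" if "u \<in> X \<union> Y" "v \<in> X \<union> Y" for u v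
    using that
  proof (elim UnE)
    assume "u \<in> X" "v \<in> Y"
    with in_X[OF _ assms(3)] across(1) in_Y[OF assms(4)] show ?thesis
      by (meson rtranclp_trans)
  next
    assume "u \<in> Y" "v \<in> X"
    with in_Y[OF _ assms(4)] across(2) in_X[OF assms(3)] show ?thesis
      by (meson rtranclp_trans)
  qed (use in_X in_Y in blast)+
  with assms(3) show ?thesis
    unfolding connected_set_def by blast
qed

definition matching :: "('a \<times> 'b) set \<Rightarrow> bool" where
  "matching M \<longleftrightarrow> inj_on fst M \<and> inj_on snd M"

lemma maximal_matching_exists:
  "\<exists>M \<subseteq> R. matching M \<and> (\<forall>(a, b) \<in> R. a \<in> fst ` M \<or> b \<in> snd ` M)"
proof -
  let ?F = "{M. M \<subseteq> R \<and> matching M}"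
  have "\<Union>C \<in> ?F" if "C \<in> chains ?F" for C
  proof -
    from that have C: "\<forall>M\<in>C. M \<subseteq> R \<and> matching M"
      and chain: "\<And>M N. M \<in> C \<Longrightarrow> N \<in> C \<Longrightarrow> M \<subseteq> N \<or> N \<subseteq> M"
      unfolding chains_def chain_subset_def by auto
    have inj: "inj_on f (\<Union>C)" if "\<forall>M\<in>C. inj_on f M" for f :: "_ \<Rightarrow> 'c"
      using inj_on_UNION_chain[of C id f] chain that by simp
    have "inj_on fst (\<Union>C)" "inj_on snd (\<Union>C)"
      using C by (auto simp: matching_def intro!: inj)
    with C show ?thesis
      unfolding matching_def by blast
  qed
  then obtain M where M: "M \<subseteq> R" "matching M" and max: "\<forall>N\<in>?F. M \<subseteq> N \<longrightarrow> N = M"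
    using Zorn_Lemma[of ?F] by blast
  have maximal: "a \<in> fst ` M \<or> b \<in> snd ` M" if "(a, b) \<in> R" for a b
  proof (rule ccontr)
    assume unmatched: "\<not> (a \<in> fst ` M \<or> b \<in> snd ` M)"
    then have "insert (a, b) M \<in> ?F"
      using M that unfolding matching_def by (auto simp: image_iff)
    with max have "(a, b) \<in> M" by blast
    with unmatched show False by force
  qed
  then have "\<forall>(a, b) \<in> R. a \<in> fst ` M \<or> b \<in> snd ` M"
    by auto
  with M show ?thesis
    by (intro exI[of _ M] conjI)
qed

lemma card_of_ordLess_Diff:
  assumes "infinite A" "|A| <o |B|" "|S| \<le>o |A|"
  shows "|A| <o |B - S|"
proof -
  have "\<not> |B - S| \<le>o |A|"
  proof
    assume "|B - S| \<le>o |A|"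
    with assms(1,3) have "|(B - S) \<union> S| \<le>o |A|"
      by (intro card_of_Un_ordLeq_infinite_Field) (simp_all add: Field_card_of card_of_card_order_on)
    moreover have "|B| \<le>o |(B - S) \<union> S|"
      by (rule card_of_mono1) blast
    ultimately have "|B| \<le>o |A|"
      by (rule ordLeq_transitive[rotated])
    with assms(2) show False
      by (simp add: not_ordLess_ordLeq)
  qed
  then show ?thesis
    using not_ordLeq_iff_ordLess[OF card_of_Well_order card_of_Well_order] by blast
qed

locale graph_minor =
  fixes V :: "'a set" and E :: "'a \<Rightarrow> 'a \<Rightarrow> bool"
    and HV :: "'b set" and HE :: "'b \<Rightarrow> 'b \<Rightarrow> bool" and \<beta> :: "'b \<Rightarrow> 'a set"
  assumes graph: "graph V E"
    and model: "minor_model V E HV HE \<beta>"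
begin

lemma E_sym: "E x y \<Longrightarrow> E y x"
  using graph by (simp add: graph_def)

lemma HE_sym: "HE h h' \<Longrightarrow> HE h' h"
  using model by (simp add: minor_model_def graph_def)

lemma branch_set: "h \<in> HV \<Longrightarrow> \<beta> h \<subseteq> V \<and> connected_set E (\<beta> h)"
  using model by (simp add: minor_model_def)

lemma branch_set_nonempty: "h \<in> HV \<Longrightarrow> \<beta> h \<noteq> {}"
  using branch_set by (simp add: connected_set_def)

lemma branch_sets_disjoint: "h \<in> HV \<Longrightarrow> h' \<in> HV \<Longrightarrow> h \<noteq> h' \<Longrightarrow> \<beta> h \<inter> \<beta> h' = {}"
  using model by (simp add: minor_model_def)

lemma branch_sets_adjacent: "HE h h' \<Longrightarrow> \<exists>x\<in>\<beta> h. \<exists>y\<in>\<beta> h'. E x y"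
  using model by (simp add: minor_model_def)

definition branch_union :: "'b set \<Rightarrow> 'a set" where
  "branch_union S = \<Union>(\<beta> ` S)"

lemma branch_set_subset_branch_union_iff:
  assumes "h \<in> HV" "S \<subseteq> HV"
  shows "\<beta> h \<subseteq> branch_union S \<longleftrightarrow> h \<in> S"
proof
  assume "\<beta> h \<subseteq> branch_union S"
  moreover obtain x where "x \<in> \<beta> h" using branch_set_nonempty[OF assms(1)] by blast
  ultimately obtain h' where "h' \<in> S" "x \<in> \<beta> h'" unfolding branch_union_def by blast
  show "h \<in> S"
  proof (rule ccontr)
    assume "h \<notin> S"
    with \<open>h' \<in> S\<close> assms(2) have "h' \<in> HV" "h \<noteq> h'" by auto
    with assms(1) have "\<beta> h \<inter> \<beta> h' = {}" by (rule branch_sets_disjoint)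
    with \<open>x \<in> \<beta> h\<close> \<open>x \<in> \<beta> h'\<close> show False by blast
  qed
qed (auto simp: branch_union_def)

lemma branch_union_subset: "S \<subseteq> HV \<Longrightarrow> branch_union S \<subseteq> V"
  using branch_set by (auto simp: branch_union_def)

lemma branch_union_mono_iff:
  assumes "S \<subseteq> HV" "T \<subseteq> HV"
  shows "branch_union S \<subseteq> branch_union T \<longleftrightarrow> S \<subseteq> T"
proof
  assume union_le: "branch_union S \<subseteq> branch_union T"
  show "S \<subseteq> T"
  proof
    fix h assume "h \<in> S"
    then have "h \<in> HV" "\<beta> h \<subseteq> branch_union S"
      using assms(1) by (auto simp: branch_union_def)
    with union_le assms(2) show "h \<in> T"
      using branch_set_subset_branch_union_iff[of h T] by blast
  qed
qed (auto simp: branch_union_def)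

lemma inj_on_branch_union: "inj_on branch_union (Pow HV)"
  by (rule inj_onI) (metis PowD branch_union_mono_iff order_refl subset_antisym)

lemma branch_unions_disjoint:
  assumes "S \<subseteq> HV" "T \<subseteq> HV" "S \<inter> T = {}"
  shows "branch_union S \<inter> branch_union T = {}"
proof (rule equals0I)
  fix x assume "x \<in> branch_union S \<inter> branch_union T"
  then obtain h h' where "h \<in> S" "h' \<in> T" "x \<in> \<beta> h" "x \<in> \<beta> h'"
    unfolding branch_union_def by blast
  moreover from \<open>h \<in> S\<close> \<open>h' \<in> T\<close> assms have "h \<in> HV" "h' \<in> HV" "h \<noteq> h'"
    by auto
  ultimately show False
    using branch_sets_disjoint by blast
qed

end

locale barricade_minor = graph_minor +
  fixes A B :: "'b set"
  assumes barricade: "barricade HV HE A B"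
begin

lemma A_B_disjoint: "A \<inter> B = {}"
  and A_subset: "A \<subseteq> HV" and B_subset: "B \<subseteq> HV"
  and card_A_less_B: "|A| <o |B|"
  and infinite_neighbours: "b \<in> B \<Longrightarrow> infinite {a\<in>A. HE b a}"
  using barricade by (auto simp: barricade_def)

lemma infinite_A: "infinite A"
proof -
  have "B \<noteq> {}"
    using card_A_less_B card_of_empty not_ordLess_ordLeq by blast
  then obtain b where "b \<in> B" by blast
  with infinite_neighbours show ?thesis
    using finite_subset[of "{a\<in>A. HE b a}" A] by blast
qed

definition cross_edges :: "('b \<times> 'b) set" where
  "cross_edges = {(a, b). a \<in> A \<and> b \<in> B \<and> HE a b}"

end

locale barricade_minor_matching = barricade_minor +
  fixes M :: "('b \<times> 'b) set"
  assumes matching: "matching M"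
    and matching_edges: "M \<subseteq> cross_edges"
    and matching_maximal: "\<forall>(a, b) \<in> cross_edges. a \<in> fst ` M \<or> b \<in> snd ` M"
begin

lemma matched_pair: "(a, b) \<in> M \<Longrightarrow> a \<in> A \<and> b \<in> B \<and> HE a b"
  using matching_edges unfolding cross_edges_def by blast

lemma matched_pairs_eq_iff: "(a, b) \<in> M \<Longrightarrow> (a', b') \<in> M \<Longrightarrow> a = a' \<longleftrightarrow> b = b'"
  using matching unfolding matching_def inj_on_def by force

definition unmatched :: "'b set" where
  "unmatched = B - snd ` M"

definition pair_parts :: "'b set set" where
  "pair_parts = (\<lambda>(a, b). {a, b}) ` M"

definition single_parts :: "'b set set" where
  "single_parts = (\<lambda>b. {b}) ` unmatched"

definition parts :: "'b set set" where
  "parts = pair_parts \<union> single_parts"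

lemma part_cases:
  assumes "S \<in> parts"
  obtains a b where "(a, b) \<in> M" "S = {a, b}"
  | b where "b \<in> unmatched" "S = {b}"
  using assms unfolding parts_def pair_parts_def single_parts_def by auto

lemma part_subset: "S \<in> parts \<Longrightarrow> S \<subseteq> HV"
  by (erule part_cases) (use matched_pair A_subset B_subset in \<open>auto simp: unmatched_def\<close>)

lemma part_meets_B: "S \<in> parts \<Longrightarrow> \<exists>b\<in>B. b \<in> S"
  by (erule part_cases) (use matched_pair in \<open>auto simp: unmatched_def\<close>)

lemma parts_disjoint:
  assumes "S \<in> parts" "T \<in> parts" "S \<noteq> T"
  shows "S \<inter> T = {}"
  using assms(1)
proof (cases rule: part_cases)
  case (1 a b)
  show ?thesis
    using assms(2)
  proof (cases rule: part_cases)
    case (1 a' b')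
    with \<open>(a, b) \<in> M\<close> \<open>S = {a, b}\<close> assms(3) show ?thesis
      using matched_pairs_eq_iff matched_pair A_B_disjoint by blast
  next
    case (2 b')
    with \<open>(a, b) \<in> M\<close> \<open>S = {a, b}\<close> show ?thesis
      using matched_pair A_B_disjoint unfolding unmatched_def by force
  qed
next
  case (2 b)
  show ?thesis
    using assms(2)
  proof (cases rule: part_cases)
    case (1 a' b')
    with \<open>b \<in> unmatched\<close> \<open>S = {b}\<close> show ?thesis
      using matched_pair A_B_disjoint unfolding unmatched_def by force
  next
    case (2 b')
    with \<open>S = {b}\<close> assms(3) show ?thesis by blast
  qed
qed

lemma pair_parts_single_parts_disjoint: "pair_parts \<inter> single_parts = {}"
  unfolding pair_parts_def single_parts_def unmatched_def
  using matched_pair A_B_disjoint by (force simp: doubleton_eq_iff)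

lemma connected_branch_union: "S \<in> parts \<Longrightarrow> connected_set E (branch_union S)"
proof (erule part_cases)
  fix a b assume "(a, b) \<in> M" "S = {a, b}"
  then have "a \<in> HV" "b \<in> HV" "HE a b"
    using matched_pair A_subset B_subset by blast+
  moreover obtain x y where "x \<in> \<beta> a" "y \<in> \<beta> b" "E x y"
    using branch_sets_adjacent[OF \<open>HE a b\<close>] by blast
  ultimately have "connected_set E (\<beta> a \<union> \<beta> b)"
    by (intro connected_set_Un[of E _ _ x y]) (simp_all add: branch_set E_sym)
  then show "connected_set E (branch_union S)"
    by (simp add: \<open>S = {a, b}\<close> branch_union_def)
next
  fix b assume "b \<in> unmatched" "S = {b}"
  then show "connected_set E (branch_union S)"
    using branch_set B_subset unfolding unmatched_def branch_union_def by auto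
qed

(* The contracted minor has its own branch sets as vertices, so its model map is id. *)

definition contracted_A :: "'a set set" where
  "contracted_A = branch_union ` pair_parts"

definition contracted_B :: "'a set set" where
  "contracted_B = branch_union ` single_parts"

definition contracted_edge :: "'a set \<Rightarrow> 'a set \<Rightarrow> bool" where
  "contracted_edge X Y \<longleftrightarrow>
     (X \<in> contracted_A \<and> Y \<in> contracted_B \<or> X \<in> contracted_B \<and> Y \<in> contracted_A) \<and>
     (\<exists>x\<in>X. \<exists>y\<in>Y. E x y)"

lemma contracted_vertices: "contracted_A \<union> contracted_B = branch_union ` parts"
  unfolding contracted_A_def contracted_B_def parts_def by blast

lemma inj_on_branch_union_parts: "inj_on branch_union parts"
  using inj_on_branch_union part_subset by (blast intro: inj_on_subset)

lemma contracted_A_B_disjoint: "contracted_A \<inter> contracted_B = {}"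
  unfolding contracted_A_def contracted_B_def
  using inj_on_image_Int[OF inj_on_branch_union_parts, of pair_parts single_parts]
    pair_parts_single_parts_disjoint
  by (simp add: parts_def)

lemma contracted_graph: "graph (contracted_A \<union> contracted_B) contracted_edge"
proof -
  have "X \<in> contracted_A \<union> contracted_B \<and> Y \<in> contracted_A \<union> contracted_B \<and>
      X \<noteq> Y \<and> contracted_edge Y X" if "contracted_edge X Y" for X Y
  proof -
    from that have sides:
        "X \<in> contracted_A \<and> Y \<in> contracted_B \<or> X \<in> contracted_B \<and> Y \<in> contracted_A"
      and "\<exists>x\<in>X. \<exists>y\<in>Y. E x y"
      unfolding contracted_edge_def by simp_all
    then obtain x y where "x \<in> X" "y \<in> Y" "E x y" by blast
    with sides have "contracted_edge Y X"
      unfolding contracted_edge_def using E_sym by blast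
    moreover from sides contracted_A_B_disjoint have "X \<noteq> Y" by blast
    ultimately show ?thesis
      using sides by blast
  qed
  then show ?thesis
    unfolding graph_def by blast
qed

lemma contracted_minor_model:
  "minor_model V E (contracted_A \<union> contracted_B) contracted_edge id"
proof -
  have branch_set: "X \<subseteq> V \<and> connected_set E X" if "X \<in> contracted_A \<union> contracted_B" for X
  proof -
    from that obtain S where "S \<in> parts" "X = branch_union S"
      unfolding contracted_vertices by blast
    then show ?thesis
      using connected_branch_union part_subset branch_union_subset by simp
  qed
  have disjoint: "X \<inter> Y = {}"
    if "X \<in> contracted_A \<union> contracted_B" "Y \<in> contracted_A \<union> contracted_B" "X \<noteq> Y" for X Y
  proof -
    from that obtain S T where "S \<in> parts" "T \<in> parts" "X = branch_union S" "Y = branch_union T"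
      unfolding contracted_vertices by blast
    moreover from this \<open>X \<noteq> Y\<close> have "S \<inter> T = {}"
      using parts_disjoint by blast
    ultimately show ?thesis
      using branch_unions_disjoint part_subset by simp
  qed
  show ?thesis
    unfolding minor_model_def
    using contracted_graph branch_set disjoint by (simp add: contracted_edge_def)
qed

lemma card_matching_le_A: "|M| \<le>o |A|"
  using matching matched_pair unfolding matching_def
  by (auto simp: card_of_ordLeq[symmetric])

lemma contracted_A_le_A: "|contracted_A| \<le>o |A|"
proof -
  have "|contracted_A| \<le>o |M|"
    unfolding contracted_A_def pair_parts_def image_comp
    by (rule card_of_image)
  then show ?thesis
    using card_matching_le_A by (rule ordLeq_transitive)
qed

lemma A_less_contracted_B: "|A| <o |contracted_B|"
proof -
  have "|snd ` M| \<le>o |A|"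
    using card_of_image card_matching_le_A by (rule ordLeq_transitive)
  then have "|A| <o |unmatched|"
    unfolding unmatched_def
    using card_of_ordLess_Diff infinite_A card_A_less_B by blast
  moreover have "inj_on (branch_union \<circ> (\<lambda>b. {b})) unmatched"
    using inj_on_subset[OF inj_on_branch_union_parts]
    by (intro comp_inj_on) (auto simp: parts_def single_parts_def)
  then have "|unmatched| \<le>o |contracted_B|"
    unfolding contracted_B_def single_parts_def image_comp
    by (auto simp: card_of_ordLeq[symmetric])
  ultimately show ?thesis
    by (rule ordLess_ordLeq_trans)
qed

lemma infinite_contracted_neighbours:
  assumes "Y \<in> contracted_B"
  shows "infinite {X \<in> contracted_A. contracted_edge Y X}"
proof -
  from assms obtain b where b: "b \<in> unmatched" "Y = \<beta> b"
    unfolding contracted_B_def single_parts_def by (auto simp: branch_union_def)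
  let ?N = "{a \<in> A. HE b a}"
  have "\<exists>b'. (a, b') \<in> M" if "a \<in> ?N" for a
  proof -
    from that b(1) have "(a, b) \<in> cross_edges" "b \<notin> snd ` M"
      unfolding cross_edges_def unmatched_def by (auto intro: HE_sym)
    with matching_maximal have "a \<in> fst ` M" by blast
    then show ?thesis by force
  qed
  then obtain partner where partner: "(a, partner a) \<in> M" if "a \<in> ?N" for a
    by metis
  define contract where "contract a = branch_union {a, partner a}" for a
  have contract_covers: "\<beta> a \<subseteq> contract a" for a
    by (simp add: contract_def branch_union_def)
  have "contract ` ?N \<subseteq> {X \<in> contracted_A. contracted_edge Y X}"
  proof safe
    fix a assume "a \<in> A" "HE b a"
    with partner show "contract a \<in> contracted_A"
      unfolding contract_def contracted_A_def pair_parts_def by force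
    moreover obtain x y where "x \<in> \<beta> b" "y \<in> \<beta> a" "E x y"
      using branch_sets_adjacent[OF \<open>HE b a\<close>] by blast
    ultimately show "contracted_edge Y (contract a)"
      using assms b(2) contract_covers unfolding contracted_edge_def by blast
  qed
  moreover have "inj_on contract ?N"
  proof (rule inj_onI)
    fix a a' assume "a \<in> ?N" "a' \<in> ?N" "contract a = contract a'"
    then have "\<beta> a \<subseteq> branch_union {a', partner a'}"
      using contract_covers[of a] by (simp add: contract_def)
    moreover have "a \<in> HV" "{a', partner a'} \<subseteq> HV" "partner a' \<in> B"
      using \<open>a \<in> ?N\<close> \<open>a' \<in> ?N\<close> partner matched_pair A_subset B_subset by blast+
    ultimately have "a \<in> {a', partner a'}"
      using branch_set_subset_branch_union_iff by blast
    with \<open>a \<in> ?N\<close> \<open>partner a' \<in> B\<close> A_B_disjoint show "a = a'"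
      by blast
  qed
  then have "infinite (contract ` ?N)"
    using infinite_neighbours b(1) finite_imageD unfolding unmatched_def by blast
  ultimately show ?thesis
    using finite_subset by blast
qed

lemma contracted_barricade:
  "barricade (contracted_A \<union> contracted_B) contracted_edge contracted_A contracted_B"
  unfolding barricade_def
  using contracted_graph contracted_A_B_disjoint infinite_contracted_neighbours
    ordLeq_ordLess_trans[OF contracted_A_le_A A_less_contracted_B]
  by (auto simp: contracted_edge_def)

lemma finite_part: "S \<in> parts \<Longrightarrow> finite S"
  by (erule part_cases) simp_all

lemma contracted_countable:
  assumes "\<forall>h\<in>HV. countable (\<beta> h)"
  shows "\<forall>X \<in> contracted_A \<union> contracted_B. countable X"
proof
  fix X assume "X \<in> contracted_A \<union> contracted_B"
  then obtain S where "S \<in> parts" "X = branch_union S"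
    unfolding contracted_vertices by blast
  moreover from \<open>S \<in> parts\<close> have "countable S"
    by (simp add: finite_part countable_finite)
  ultimately show "countable X"
    using assms part_subset unfolding branch_union_def by (auto intro: countable_UN)
qed

lemma contracted_rooted:
  assumes "\<forall>b\<in>B. \<beta> b \<inter> U \<noteq> {}"
  shows "\<forall>X \<in> contracted_A \<union> contracted_B. X \<inter> U \<noteq> {}"
  unfolding contracted_vertices branch_union_def
  using assms part_meets_B by fastforce

end

theorem lemma5p3:
  fixes V :: "'a set" and E :: "'a \<Rightarrow> 'a \<Rightarrow> bool" and U :: "'a set"
    and HV :: "'b set" and HE :: "'b \<Rightarrow> 'b \<Rightarrow> bool" and \<beta> :: "'b \<Rightarrow> 'a set"
    and A B :: "'b set"
  assumes "graph V E" and "U \<subseteq> V"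
    and "minor_model V E HV HE \<beta>"
    and "\<forall>h\<in>HV. countable (\<beta> h)"
    and "barricade HV HE A B"
    and "\<forall>b\<in>B. \<beta> b \<inter> U \<noteq> {}"
  shows "\<exists>(HV' :: 'a set set) HE' \<beta>'. minor_model V E HV' HE' \<beta>' \<and>
           (\<forall>h\<in>HV'. countable (\<beta>' h)) \<and>
           (\<forall>h\<in>HV'. \<beta>' h \<inter> U \<noteq> {}) \<and>
           (\<exists>A' B'. barricade HV' HE' A' B')"
proof -
  interpret barricade_minor V E HV HE \<beta> A B
    using assms(1,3,5) by unfold_locales
  obtain M where "M \<subseteq> cross_edges" "matching M"
    and "\<forall>(a, b) \<in> cross_edges. a \<in> fst ` M \<or> b \<in> snd ` M"
    using maximal_matching_exists[of cross_edges] by (elim exE conjE)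
  then interpret barricade_minor_matching V E HV HE \<beta> A B M
    by unfold_locales
  show ?thesis
    using contracted_minor_model contracted_countable[OF assms(4)] contracted_rooted[OF assms(6)]
      contracted_barricade
    by (intro exI[of _ "contracted_A \<union> contracted_B"] exI[of _ contracted_edge] exI[of _ id]) auto
qed

end
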